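(* Let $\mathcal{A}$ be any (deterministic) online bin packing algorithm, let $F$ be a discrete probability distribution on $(0,1]$, and for a positive integer $n$ let $I_n(F)=(X_1,\ldots,X_n)$ be a list of $n$ i.i.d. samples from $F$. Then there exists a list $I$ of $n$ items such that $$\frac{\mathbb{E}[\mathcal{A}(I^\sigma)]}{\mathrm{OPT}(I)} \ge \frac{\mathbb{E}[\mathcal{A}(I_n(F))]}{\mathbb{E}[\mathrm{OPT}(I_n(F))]},$$ where $\sigma$ is uniform on $\mathcal{S}_n$. Moreover, if there is a constant $c>0$ such that $X_i\ge c$ almost surely for all $i\in[n]$, then $\mathrm{OPT}(I)\ge cn$.
   Context: Bin packing: items with sizes in $(0,1]$ are packed into unit-capacity bins (total size per bin at most $1$); $\mathrm{OPT}(I)$ is the minimum number of bins for list $I$, and $\mathcal{A}(I)$ the number of bins used by algorithm $\mathcal{A}$ when the items of $I$ arrive online in the given order. For $\sigma\in\mathcal{S}_n$ (permutations of $[n]$), $I^\sigma=(x_{\sigma(1)},\ldots,x_{\sigma(n)})$. *)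

theory Defs
  imports "HOL-Probability.Probability" "HOL-Combinatorics.Permutations"
begin

text \<open>A deterministic online bin packing algorithm: given the list of previously
arrived items and the current item, it returns the index of the bin into which
the current item is placed. Since it is deterministic, its earlier decisions are
determined by the earlier items.\<close>
type_synonym online_alg = "real list \<Rightarrow> real \<Rightarrow> nat"

definition online_assign :: "online_alg \<Rightarrow> real list \<Rightarrow> nat list" where
  "online_assign A xs = map (\<lambda>i. A (take i xs) (xs ! i)) [0..<length xs]"

definition feasible_packing :: "real list \<Rightarrow> (nat \<Rightarrow> nat) \<Rightarrow> bool" where
  "feasible_packing xs f \<longleftrightarrow>
     (\<forall>b. (\<Sum>i\<in>{i. i < length xs \<and> f i = b}. xs ! i) \<le> 1)"

definition valid_online_alg :: "online_alg \<Rightarrow> bool" where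
  "valid_online_alg A \<longleftrightarrow>
     (\<forall>xs. set xs \<subseteq> {0<..1} \<longrightarrow> feasible_packing xs (\<lambda>i. online_assign A xs ! i))"

definition alg_bins :: "online_alg \<Rightarrow> real list \<Rightarrow> nat" where
  "alg_bins A xs = card (set (online_assign A xs))"

definition OPT :: "real list \<Rightarrow> nat" where
  "OPT xs = (LEAST k. \<exists>f. (\<forall>i<length xs. f i < k) \<and> feasible_packing xs f)"

text \<open>The list I^sigma = (x_sigma(1), ..., x_sigma(n)), 0-indexed.\<close>
definition permute_list_by :: "(nat \<Rightarrow> nat) \<Rightarrow> real list \<Rightarrow> real list" where
  "permute_list_by \<sigma> xs = map (\<lambda>i. xs ! \<sigma> i) [0..<length xs]"

definition uniform_perm :: "nat \<Rightarrow> (nat \<Rightarrow> nat) pmf" where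
  "uniform_perm n = pmf_of_set {\<sigma>. \<sigma> permutes {..<n}}"

fun iid_list :: "'a pmf \<Rightarrow> nat \<Rightarrow> 'a list pmf" where
  "iid_list F 0 = return_pmf []"
| "iid_list F (Suc n) = bind_pmf F (\<lambda>x. map_pmf (Cons x) (iid_list F n))"

end

theory Submission
  imports Defs
begin

text \<open>The distribution of \<open>X = I\<^sub>n(F)\<close> is invariant under permutations of the list, so
  \<open>E[A(X)] = E[g(X)]\<close> for the order-averaged cost \<open>g(I) = E\<^sub>\<sigma>[A(I\<^sup>\<sigma>)]\<close>. If every list in the
  support had \<open>g(I) < r OPT(I)\<close> with \<open>r = E[A(X)] / E[OPT(X)]\<close>, taking expectations would give
  \<open>E[g(X)] < r E[OPT(X)] = E[A(X)]\<close>; so some list \<open>I\<close> of the support has ratio at least \<open>r\<close>.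
  Its items are at least \<open>c\<close>, and \<open>OPT(I)\<close> is at least the total size of \<open>I\<close>, hence at least
  \<open>c n\<close>.\<close>

lemma integrable_measure_pmf_bounded:
  fixes f :: "'a \<Rightarrow> real"
  assumes "\<And>x. x \<in> set_pmf M \<Longrightarrow> \<bar>f x\<bar> \<le> B"
  shows "integrable M f"
  by (rule measure_pmf.integrable_const_bound[where B = B]) (use assms in \<open>auto simp: AE_measure_pmf_iff\<close>)

lemma map_pmf_eq_self_if_bij_betw:
  assumes bij: "bij_betw h (set_pmf M) (set_pmf M)"
    and invariant: "\<And>x. x \<in> set_pmf M \<Longrightarrow> pmf M (h x) = pmf M x"
  shows "map_pmf h M = M"
proof (rule pmf_eqI)
  fix y
  show "pmf (map_pmf h M) y = pmf M y"
  proof (cases "y \<in> set_pmf M")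
    case True
    then obtain x where x: "x \<in> set_pmf M" "y = h x"
      using bij by (auto simp: bij_betw_def)
    then show ?thesis
      using invariant pmf_map_inj[OF bij_betw_imp_inj_on[OF bij]] by simp
  next
    case False
    moreover have "set_pmf (map_pmf h M) = set_pmf M"
      using bij by (simp add: bij_betw_def)
    ultimately show ?thesis
      by (metis pmf_eq_0_set_pmf)
  qed
qed

lemma expectation_average_of_invariant_maps:
  fixes M :: "'a pmf" and S :: "'s set" and act :: "'s \<Rightarrow> 'a \<Rightarrow> 'a" and f :: "'a \<Rightarrow> real"
  assumes S: "finite S" "S \<noteq> {}"
    and invariant: "\<And>s. s \<in> S \<Longrightarrow> map_pmf (act s) M = M"
    and f: "integrable M f"
  defines "g \<equiv> \<lambda>x. measure_pmf.expectation (pmf_of_set S) (\<lambda>s. f (act s x))"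
  shows "integrable M g" and "measure_pmf.expectation M g = measure_pmf.expectation M f"
proof -
  have g_eq: "g = (\<lambda>x. (\<Sum>s\<in>S. f (act s x)) / card S)"
    using S by (simp add: g_def integral_pmf_of_set)
  have integrable_act: "integrable M (\<lambda>x. f (act s x))" if "s \<in> S" for s
    using f invariant[OF that] integrable_map_pmf_eq[of "act s" M f] by simp
  have expectation_act: "measure_pmf.expectation M (\<lambda>x. f (act s x)) = measure_pmf.expectation M f"
    if "s \<in> S" for s
    using invariant[OF that] integral_map_pmf[of "act s" M f] by simp
  show "integrable M g"
    unfolding g_eq using integrable_act by auto
  show "measure_pmf.expectation M g = measure_pmf.expectation M f"
    unfolding g_eq using S integrable_act expectation_act by (simp add: Bochner_Integration.integral_sum)
qed

lemma exists_ratio_ge_ratio_of_expectations: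
  fixes M :: "'a pmf" and f g :: "'a \<Rightarrow> real"
  assumes "integrable M f" "integrable M g" and g_pos: "\<And>x. x \<in> set_pmf M \<Longrightarrow> g x > 0"
  shows "\<exists>x\<in>set_pmf M. measure_pmf.expectation M f / measure_pmf.expectation M g \<le> f x / g x"
proof (rule ccontr)
  define r where "r = measure_pmf.expectation M f / measure_pmf.expectation M g"
  have "measure_pmf.expectation M (\<lambda>_. 0) < measure_pmf.expectation M g"
    by (rule measure_pmf.integral_less_AE_space) (use assms in \<open>auto simp: AE_measure_pmf_iff\<close>)
  then have Eg_pos: "measure_pmf.expectation M g > 0"
    by simp
  assume "\<not> (\<exists>x\<in>set_pmf M. r \<le> f x / g x)"
  then have "f x < r * g x" if "x \<in> set_pmf M" for x
    using that g_pos by (auto simp: not_le pos_divide_less_eq)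
  then have "measure_pmf.expectation M f < measure_pmf.expectation M (\<lambda>x. r * g x)"
    by (intro measure_pmf.integral_less_AE_space) (use assms in \<open>auto simp: AE_measure_pmf_iff\<close>)
  also have "\<dots> = measure_pmf.expectation M f"
    using Eg_pos by (simp add: r_def)
  finally show False
    by simp
qed

lemma permute_list_inv_cancel:
  assumes "\<sigma> permutes {..<length xs}"
  shows "permute_list (inv \<sigma>) (permute_list \<sigma> xs) = xs"
  by (metis assms permute_list_compose permute_list_id permutes_inv permutes_inv_o(1))

lemma permute_list_by_eq_permute_list: "permute_list_by = permute_list"
  by (simp add: fun_eq_iff permute_list_by_def permute_list_def)

lemma iid_list_Suc_pair:
  "iid_list F (Suc n) = map_pmf (\<lambda>(x, xs). x # xs) (pair_pmf F (iid_list F n))"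
  by (simp add: pair_pmf_def map_bind_pmf map_pmf_def bind_assoc_pmf bind_return_pmf)

lemma pmf_iid_list:
  "pmf (iid_list F n) xs = (if length xs = n then prod_list (map (pmf F) xs) else 0)"
proof (induction n arbitrary: xs)
  case 0
  then show ?case by (cases xs) (auto simp: indicator_def)
next
  case (Suc n)
  have inj: "inj (\<lambda>(x, xs). x # xs)" by (auto intro: injI)
  show ?case
  proof (cases xs)
    case Nil
    then show ?thesis by (auto simp: iid_list_Suc_pair pmf_eq_0_set_pmf)
  next
    case (Cons y ys)
    have "pmf (iid_list F (Suc n)) xs = pmf F y * pmf (iid_list F n) ys"
      unfolding iid_list_Suc_pair Cons by (simp add: pmf_map_inj'[OF inj, of _ "(y, ys)", simplified] pmf_pair)
    then show ?thesis using Suc.IH[of ys] Cons by simp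
  qed
qed

lemma set_pmf_iid_list:
  "set_pmf (iid_list F n) = {xs. length xs = n \<and> set xs \<subseteq> set_pmf F}"
  by (auto simp: set_pmf_eq pmf_iid_list prod_list_zero_iff)

lemma map_pmf_permute_list_iid_list:
  assumes \<sigma>: "\<sigma> permutes {..<n}"
  shows "map_pmf (permute_list \<sigma>) (iid_list F n) = iid_list F n"
proof (rule map_pmf_eq_self_if_bij_betw)
  have \<sigma>': "inv \<sigma> permutes {..<n}" and inv_inv: "inv (inv \<sigma>) = \<sigma>"
    using \<sigma> by (auto simp: permutes_inv permutes_inv_inv)
  show "bij_betw (permute_list \<sigma>) (set_pmf (iid_list F n)) (set_pmf (iid_list F n))"
  proof (rule bij_betw_byWitness[where f' = "permute_list (inv \<sigma>)"])
    show "\<forall>xs\<in>set_pmf (iid_list F n). permute_list (inv \<sigma>) (permute_list \<sigma> xs) = xs"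
      using \<sigma> by (auto simp: set_pmf_iid_list permute_list_inv_cancel)
    show "\<forall>xs\<in>set_pmf (iid_list F n). permute_list \<sigma> (permute_list (inv \<sigma>) xs) = xs"
      using permute_list_inv_cancel[of "inv \<sigma>"] \<sigma>' by (auto simp: set_pmf_iid_list inv_inv)
  qed (use \<sigma> \<sigma>' in \<open>auto simp: set_pmf_iid_list\<close>)
  show "pmf (iid_list F n) (permute_list \<sigma> xs) = pmf (iid_list F n) xs" for xs
    using \<sigma> mset_permute_list[of \<sigma> xs]
    by (auto simp: pmf_iid_list simp flip: prod_mset_prod_list)
qed

lemma feasible_packing_id:
  assumes "\<forall>x\<in>set xs. x \<le> 1"
  shows "feasible_packing xs id"
proof -
  have "{i. i < length xs \<and> id i = b} = (if b < length xs then {b} else {})" for b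
    by auto
  then show ?thesis
    using assms by (simp add: feasible_packing_def)
qed

lemma OPT_le_length:
  assumes "\<forall>x\<in>set xs. x \<le> 1"
  shows "OPT xs \<le> length xs"
  unfolding OPT_def by (rule Least_le) (use feasible_packing_id[OF assms] in \<open>auto intro!: exI[of _ id]\<close>)

lemma OPT_packing:
  assumes "\<forall>x\<in>set xs. x \<le> 1"
  obtains f where "\<forall>i<length xs. f i < OPT xs" "feasible_packing xs f"
proof -
  have "\<exists>f. (\<forall>i<length xs. f i < OPT xs) \<and> feasible_packing xs f"
    unfolding OPT_def
    by (rule LeastI_ex) (use feasible_packing_id[OF assms] in \<open>auto intro!: exI[of _ "length xs"] exI[of _ id]\<close>)
  then show thesis
    using that by blast
qed

lemma OPT_pos:
  assumes "\<forall>x\<in>set xs. x \<le> 1" "xs \<noteq> []"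
  shows "0 < OPT xs"
proof -
  obtain f where "\<forall>i<length xs. f i < OPT xs"
    using OPT_packing[OF assms(1)] by blast
  then show ?thesis
    using assms(2) by (metis length_greater_0_conv not_less_zero not_gr_zero)
qed

lemma sum_list_le_OPT:
  assumes "\<forall>x\<in>set xs. x \<le> 1"
  shows "sum_list xs \<le> real (OPT xs)"
proof -
  obtain f where f: "\<forall>i<length xs. f i < OPT xs" "feasible_packing xs f"
    using OPT_packing[OF assms] by blast
  have "sum_list xs = (\<Sum>i<length xs. xs ! i)"
    by (simp add: sum_list_sum_nth atLeast0LessThan)
  also have "\<dots> = (\<Sum>b<OPT xs. \<Sum>i\<in>{i \<in> {..<length xs}. f i = b}. xs ! i)"
    by (rule sum.group[symmetric]) (use f in auto)
  also have "\<dots> \<le> (\<Sum>b<OPT xs. 1)"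
    using f(2) unfolding feasible_packing_def by (intro sum_mono) auto
  finally show ?thesis
    by simp
qed

lemma mult_length_le_OPT:
  assumes "\<forall>x\<in>set xs. c \<le> x \<and> x \<le> 1"
  shows "c * real (length xs) \<le> real (OPT xs)"
proof -
  have "c * real (length xs) = (\<Sum>x\<leftarrow>xs. c)"
    by (simp add: sum_list_triv)
  also have "\<dots> \<le> (\<Sum>x\<leftarrow>xs. x)"
    using assms by (intro sum_list_mono) auto
  also have "\<dots> \<le> real (OPT xs)"
    using assms sum_list_le_OPT[of xs] by auto
  finally show ?thesis .
qed

lemma alg_bins_le_length: "alg_bins A xs \<le> length xs"
  unfolding alg_bins_def online_assign_def
  by (metis card_length length_map length_upt minus_nat.diff_0)

theorem lemma14:
  fixes A :: online_alg and F :: "real pmf" and n :: nat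
  assumes "valid_online_alg A"
    and "set_pmf F \<subseteq> {0<..1}"
    and "n > 0"
  shows "\<exists>I. length I = n \<and> set I \<subseteq> {0<..1} \<and>
    measure_pmf.expectation (uniform_perm n) (\<lambda>\<sigma>. real (alg_bins A (permute_list_by \<sigma> I)))
      / real (OPT I)
    \<ge> measure_pmf.expectation (iid_list F n) (\<lambda>xs. real (alg_bins A xs))
      / measure_pmf.expectation (iid_list F n) (\<lambda>xs. real (OPT xs)) \<and>
    (\<forall>c::real. c > 0 \<and> (AE x in measure_pmf F. c \<le> x) \<longrightarrow> c * real n \<le> real (OPT I))"
proof -
  let ?X = "iid_list F n" and ?alg = "\<lambda>xs. real (alg_bins A xs)" and ?opt = "\<lambda>xs. real (OPT xs)"
  let ?alg_perm = "\<lambda>xs. measure_pmf.expectation (uniform_perm n) (\<lambda>\<sigma>. ?alg (permute_list \<sigma> xs))"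
  have support: "length xs = n" "set xs \<subseteq> {0<..1}" if "xs \<in> set_pmf ?X" for xs
    using that assms(2) by (auto simp: set_pmf_iid_list)
  have integrable_alg: "integrable ?X ?alg"
    using support alg_bins_le_length by (intro integrable_measure_pmf_bounded[where B = n]) fastforce
  have integrable_opt: "integrable ?X ?opt"
    using support OPT_le_length by (intro integrable_measure_pmf_bounded[where B = n]) fastforce
  have permutations: "finite {\<sigma>. \<sigma> permutes {..<n}}" "{\<sigma>. \<sigma> permutes {..<n}} \<noteq> {}"
    by (auto simp: finite_permutations intro: permutes_id)
  have "integrable ?X ?alg_perm" "measure_pmf.expectation ?X ?alg_perm = measure_pmf.expectation ?X ?alg"
    unfolding uniform_perm_def
    using expectation_average_of_invariant_maps[OF permutations, of permute_list ?X ?alg]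
      map_pmf_permute_list_iid_list integrable_alg by auto
  moreover have "?opt xs > 0" if "xs \<in> set_pmf ?X" for xs
    using support[OF that] assms(3) OPT_pos by fastforce
  ultimately obtain I where I: "I \<in> set_pmf ?X"
    and ratio: "measure_pmf.expectation ?X ?alg / measure_pmf.expectation ?X ?opt \<le> ?alg_perm I / ?opt I"
    using exists_ratio_ge_ratio_of_expectations[of ?X ?alg_perm ?opt] integrable_opt by auto
  have "c * real n \<le> real (OPT I)" if "AE x in measure_pmf F. c \<le> x" for c
  proof -
    have "\<forall>x\<in>set I. c \<le> x \<and> x \<le> 1"
      using that I support(2)[OF I] by (auto simp: AE_measure_pmf_iff set_pmf_iid_list)
    then show ?thesis
      using mult_length_le_OPT support(1)[OF I] by fastforce
  qed
  then show ?thesis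
    using support[OF I] ratio unfolding permute_list_by_eq_permute_list by blast
qed

end
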